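(* Let $G$ be a graph with edge weights $w(e)\ge 1$, let $\alpha>1$ be a constant and $0<\epsilon<1$, and suppose $k=\ln\alpha/\ln(1+\epsilon)$ is a positive integer. For $j=1,\dots,k$ let $r(j)=\frac{j-1}{k}$ and let $w_{r(j)}$ be the rounded weight defined below. Let $\mathcal{M}$ be a maximum weight matching of $G$. Then there exists $j\in\{1,\dots,k\}$ such that $$w_{r(j)}(\mathcal{M})\ge(1-\epsilon)\frac{\alpha-1}{\alpha\ln\alpha}\,w(\mathcal{M}).$$
   Context: For $r\in[0,1)$, the rounded weight of an edge $e$ is $w_r(e)=\alpha^{l+r}$ where $l\in\mathbb{Z}$ is the unique integer with $w(e)\in[\alpha^{l+r},\alpha^{l+r+1})$. For an edge set $S$, $w(S)=\sum_{e\in S}w(e)$ and $w_r(S)=\sum_{e\in S}w_r(e)$. $\ln$ is the natural logarithm. *)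

theory Defs
  imports Complex_Main
begin

definition graph_edges :: "'a set set \<Rightarrow> bool" where
  "graph_edges E \<longleftrightarrow> finite E \<and> (\<forall>e\<in>E. card e = 2)"

definition matching :: "'a set set \<Rightarrow> 'a set set \<Rightarrow> bool" where
  "matching E M \<longleftrightarrow> M \<subseteq> E \<and> (\<forall>e\<in>M. \<forall>f\<in>M. e \<noteq> f \<longrightarrow> e \<inter> f = {})"

definition max_weight_matching ::
  "'a set set \<Rightarrow> ('a set \<Rightarrow> real) \<Rightarrow> 'a set set \<Rightarrow> bool" where
  "max_weight_matching E w M \<longleftrightarrow> matching E M \<and>
     (\<forall>M'. matching E M' \<longrightarrow> sum w M' \<le> sum w M)"

definition rounded_weight :: "real \<Rightarrow> real \<Rightarrow> ('a \<Rightarrow> real) \<Rightarrow> 'a \<Rightarrow> real" where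
  "rounded_weight \<alpha> r w e =
     \<alpha> powr (real_of_int (THE l::int. \<alpha> powr (real_of_int l + r) \<le> w e \<and>
                                     w e < \<alpha> powr (real_of_int l + r + 1)) + r)"

end

theory Submission
  imports Defs
begin

text \<open>Write \<open>\<beta> = 1 + \<epsilon>\<close>, so that \<open>\<alpha> = \<beta>^k\<close>. The rounding grid of the shift
  \<open>r(j) = (j - 1)/k\<close> consists of the powers \<open>\<beta>^n\<close> with \<open>n = j - 1 (mod k)\<close>. Hence, if
  \<open>\<beta>^m \<le> w(e) < \<beta>^(m+1)\<close>, the \<open>k\<close> rounded weights of \<open>e\<close> are \<open>\<beta>^m, \<beta>^(m-1), ..., \<beta>^(m-k+1)\<close>
  in some order, and their sum is at least \<open>w(e) (1 - 1/\<alpha>) / \<epsilon>\<close>. Summing over the matching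
  and averaging over \<open>j\<close> gives a shift with
  \<open>w_r(j)(M) \<ge> w(M) (1 - 1/\<alpha>) / (k \<epsilon>) = w(M) (\<alpha> - 1) ln(1 + \<epsilon>) / (\<alpha> \<epsilon> ln \<alpha>)\<close>,
  and \<open>ln(1 + \<epsilon>) \<ge> \<epsilon> (1 - \<epsilon>)\<close> finishes the estimate.\<close>

lemma rounded_weight_eqI:
  fixes \<alpha> r :: real and l :: int
  assumes "\<alpha> > 1"
    and lower: "\<alpha> powr (real_of_int l + r) \<le> w e"
    and upper: "w e < \<alpha> powr (real_of_int l + r + 1)"
  shows "rounded_weight \<alpha> r w e = \<alpha> powr (real_of_int l + r)"
proof -
  have unique: "l' = l"
    if "\<alpha> powr (real_of_int l' + r) \<le> w e" "w e < \<alpha> powr (real_of_int l' + r + 1)" for l' :: int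
  proof (rule ccontr)
    assume "l' \<noteq> l"
    then consider "l' + 1 \<le> l" | "l + 1 \<le> l'" by linarith
    then show False
    proof cases
      case 1
      then have "\<alpha> powr (real_of_int l' + r + 1) \<le> \<alpha> powr (real_of_int l + r)"
        using \<open>\<alpha> > 1\<close> by (intro powr_mono) linarith+
      with that lower show False by linarith
    next
      case 2
      then have "\<alpha> powr (real_of_int l + r + 1) \<le> \<alpha> powr (real_of_int l' + r)"
        using \<open>\<alpha> > 1\<close> by (intro powr_mono) linarith+
      with that upper show False by linarith
    qed
  qed
  have "(THE l::int. \<alpha> powr (real_of_int l + r) \<le> w e \<and>
                       w e < \<alpha> powr (real_of_int l + r + 1)) = l"
    using lower upper by (intro the_equality) (auto intro: unique)
  then show ?thesis unfolding rounded_weight_def by simp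
qed

lemma rounded_weight_shift_eq:
  fixes \<beta> :: real and k j :: nat and n :: int
  assumes "\<beta> > 1" "k \<ge> 1"
    and "int k dvd n - (int j - 1)"
    and "\<beta> powr real_of_int n \<le> w e" "w e < \<beta> powr (real_of_int n + real k)"
  shows "rounded_weight (\<beta> powr real k) ((real j - 1) / real k) w e = \<beta> powr real_of_int n"
proof -
  from \<open>int k dvd n - (int j - 1)\<close> obtain l where l: "n = int k * l + (int j - 1)"
    by (auto simp: dvd_def algebra_simps)
  have grid: "(\<beta> powr real k) powr (real_of_int l + (real j - 1) / real k + c)
      = \<beta> powr (real_of_int n + real k * c)" for c
  proof -
    have "real k * (real_of_int l + (real j - 1) / real k + c) = real_of_int n + real k * c"
      using \<open>k \<ge> 1\<close> by (simp add: l field_simps)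
    then show ?thesis by (simp add: powr_powr)
  qed
  have "rounded_weight (\<beta> powr real k) ((real j - 1) / real k) w e
      = (\<beta> powr real k) powr (real_of_int l + (real j - 1) / real k)"
    using grid[of 0] grid[of 1] assms(1,2,4,5)
    by (intro rounded_weight_eqI) (auto simp: gr_one_powr)
  then show ?thesis using grid[of 0] by simp
qed

lemma rounded_weight_shift_eq_residue:
  fixes \<beta> :: real and k j :: nat and m :: int
  assumes "\<beta> > 1" "k \<ge> 1"
    and lower: "\<beta> powr real_of_int m \<le> w e" and upper: "w e < \<beta> powr (real_of_int m + 1)"
  shows "rounded_weight (\<beta> powr real k) ((real j - 1) / real k) w e
         = \<beta> powr (real_of_int m - real (nat ((m - (int j - 1)) mod int k)))"
proof -
  define t where "t = (m - (int j - 1)) mod int k"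
  have t: "0 \<le> t" "t < int k" using \<open>k \<ge> 1\<close> by (simp_all add: t_def)
  have "(m - t) - (int j - 1) = int k * ((m - (int j - 1)) div int k)"
    by (simp add: t_def minus_mod_eq_mult_div[symmetric])
  then have "int k dvd (m - t) - (int j - 1)" by simp
  moreover have "\<beta> powr real_of_int (m - t) \<le> \<beta> powr real_of_int m"
    using assms(1) t by (intro powr_mono) auto
  moreover have "\<beta> powr (real_of_int m + 1) \<le> \<beta> powr (real_of_int (m - t) + real k)"
    using assms(1) t by (intro powr_mono) auto
  ultimately have "rounded_weight (\<beta> powr real k) ((real j - 1) / real k) w e
      = \<beta> powr real_of_int (m - t)"
    using lower upper by (intro rounded_weight_shift_eq[OF assms(1,2)]) simp_all
  with t show ?thesis by (simp add: t_def)
qed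

lemma bij_betw_shifted_residues:
  fixes m :: int and k :: nat
  assumes "k \<ge> 1"
  shows "bij_betw (\<lambda>j. nat ((m - (int j - 1)) mod int k)) {1..k} {..<k}"
proof -
  let ?h = "\<lambda>j. nat ((m - (int j - 1)) mod int k)"
  have "inj_on ?h {1..k}"
  proof (rule inj_onI)
    fix x y assume x: "x \<in> {1..k}" and y: "y \<in> {1..k}" and "?h x = ?h y"
    then have "(m - (int x - 1)) mod int k = (m - (int y - 1)) mod int k"
      using \<open>k \<ge> 1\<close> by (simp add: nat_eq_iff2)
    then have "int k dvd (m - (int x - 1)) - (m - (int y - 1))"
      by (simp only: mod_eq_dvd_iff)
    then have "int k dvd int y - int x" by simp
    moreover have "\<bar>int y - int x\<bar> < int k" using x y by auto
    ultimately show "x = y" using dvd_imp_le_int[of "int y - int x" "int k"] by fastforce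
  qed
  moreover have "?h ` {1..k} \<subseteq> {..<k}" using \<open>k \<ge> 1\<close> by (auto simp: nat_less_iff)
  ultimately show ?thesis
    by (simp add: bij_betw_def card_subset_eq card_image)
qed

lemma sum_inverse_powers:
  fixes \<beta> :: real
  assumes "\<beta> > 1"
  shows "(\<Sum>i<k. (1 / \<beta>) ^ Suc i) = (1 - 1 / \<beta> ^ k) / (\<beta> - 1)"
proof -
  have "(\<Sum>i<k. (1 / \<beta>) ^ Suc i) = (1 / \<beta>) * (\<Sum>i<k. (1 / \<beta>) ^ i)"
    by (simp add: sum_distrib_left)
  also have "\<dots> = (1 / \<beta>) * ((1 - (1 / \<beta>) ^ k) / (1 - 1 / \<beta>))"
    using assms by (simp add: sum_gp_strict)
  also have "\<dots> = (1 - 1 / \<beta> ^ k) / (\<beta> - 1)"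
    using assms by (simp add: field_simps power_one_over)
  finally show ?thesis .
qed

lemma sum_rounded_weight_shifts_ge:
  fixes \<beta> :: real and k :: nat
  assumes "\<beta> > 1" "k \<ge> 1" "w e > 0"
  shows "w e * (1 - 1 / \<beta> ^ k) / (\<beta> - 1)
         \<le> (\<Sum>j=1..k. rounded_weight (\<beta> powr real k) ((real j - 1) / real k) w e)"
proof -
  define m where "m = \<lfloor>log \<beta> (w e)\<rfloor>"
  define h where "h j = nat ((m - (int j - 1)) mod int k)" for j :: nat
  have bij: "bij_betw h {1..k} {..<k}"
    unfolding h_def by (rule bij_betw_shifted_residues[OF \<open>k \<ge> 1\<close>])
  have log: "\<beta> powr log \<beta> (w e) = w e" using assms by simp
  have lower: "\<beta> powr real_of_int m \<le> w e"
    using assms(1) by (subst log[symmetric], intro powr_mono) (auto simp: m_def)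
  have upper: "w e < \<beta> powr (real_of_int m + 1)"
    using assms(1) by (subst log[symmetric], intro powr_less_mono) (auto simp: m_def)
  have rounded: "rounded_weight (\<beta> powr real k) ((real j - 1) / real k) w e
      = \<beta> powr (real_of_int m - real (h j))" for j
    unfolding h_def using assms(1,2) lower upper by (rule rounded_weight_shift_eq_residue)
  have "w e * (1 - 1 / \<beta> ^ k) / (\<beta> - 1) = (\<Sum>i<k. w e * (1 / \<beta>) ^ Suc i)"
    by (simp only: sum_distrib_left[symmetric] sum_inverse_powers[OF assms(1)] times_divide_eq_right)
  also have "\<dots> \<le> (\<Sum>i<k. \<beta> powr (real_of_int m - real i))"
  proof (rule sum_mono)
    fix i
    have "\<beta> powr (real_of_int m - real i) = \<beta> powr (real_of_int m + 1) * (1 / \<beta>) ^ Suc i"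
      using assms(1) by (simp add: powr_diff powr_add powr_realpow field_simps power_one_over)
    moreover have "w e * (1 / \<beta>) ^ Suc i \<le> \<beta> powr (real_of_int m + 1) * (1 / \<beta>) ^ Suc i"
      using upper assms(1) by (intro mult_right_mono) simp_all
    ultimately show "w e * (1 / \<beta>) ^ Suc i \<le> \<beta> powr (real_of_int m - real i)"
      by simp
  qed
  also have "\<dots> = (\<Sum>j=1..k. \<beta> powr (real_of_int m - real (h j)))"
    using sum.reindex_bij_betw[OF bij, of "\<lambda>i. \<beta> powr (real_of_int m - real i)"] by simp
  finally show ?thesis by (simp add: rounded)
qed

lemma ex_ge_average:
  fixes f :: "'a \<Rightarrow> real"
  assumes "finite A" "A \<noteq> {}" "real (card A) * c \<le> sum f A"
  shows "\<exists>a\<in>A. c \<le> f a"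
proof (rule ccontr)
  assume "\<not> ?thesis"
  then have "sum f A < sum (\<lambda>_. c) A"
    using assms(1,2) by (intro sum_strict_mono) auto
  with assms(3) show False by simp
qed

lemma one_minus_le_div_ln_one_plus:
  fixes \<epsilon> :: real
  assumes "0 < \<epsilon>" "\<epsilon> < 1"
  shows "(1 - \<epsilon>) / ln (1 + \<epsilon>) \<le> 1 / \<epsilon>"
proof -
  have "\<epsilon> * (1 - \<epsilon>) \<le> ln (1 + \<epsilon>)"
    using ln_one_plus_pos_lower_bound[of \<epsilon>] assms by (simp add: power2_eq_square algebra_simps)
  moreover have "ln (1 + \<epsilon>) > 0" using assms by simp
  ultimately show ?thesis using assms by (simp add: divide_simps mult.commute)
qed

theorem lemma8:
  fixes E :: "'a set set" and w :: "'a set \<Rightarrow> real" and M :: "'a set set"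
    and \<alpha> \<epsilon> :: real and k :: nat
  assumes "graph_edges E"
    and "\<And>e. e \<in> E \<Longrightarrow> w e \<ge> 1"
    and "\<alpha> > 1" and "0 < \<epsilon>" and "\<epsilon> < 1"
    and "k \<ge> 1" and "real k = ln \<alpha> / ln (1 + \<epsilon>)"
    and "max_weight_matching E w M"
  shows "\<exists>j\<in>{1..k}.
           (\<Sum>e\<in>M. rounded_weight \<alpha> ((real j - 1) / real k) w e)
             \<ge> (1 - \<epsilon>) * ((\<alpha> - 1) / (\<alpha> * ln \<alpha>)) * (\<Sum>e\<in>M. w e)"
proof (rule ex_ge_average)
  have "M \<subseteq> E" using assms(8) by (simp add: max_weight_matching_def matching_def)
  then have weight_ge_1: "\<And>e. e \<in> M \<Longrightarrow> w e \<ge> 1" using assms(2) by auto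
  have ln_\<alpha>: "ln \<alpha> = real k * ln (1 + \<epsilon>)" using assms(4,7) by simp
  have \<alpha>: "(1 + \<epsilon>) powr real k = \<alpha>" "(1 + \<epsilon>) ^ k = \<alpha>"
    using assms(3,4) by (simp_all add: powr_def ln_\<alpha>[symmetric] flip: powr_realpow)
  have "real (card {1..k}) * ((1 - \<epsilon>) * ((\<alpha> - 1) / (\<alpha> * ln \<alpha>)) * (\<Sum>e\<in>M. w e))
      = (1 - \<epsilon>) / ln (1 + \<epsilon>) * ((\<alpha> - 1) / \<alpha>) * (\<Sum>e\<in>M. w e)"
    using assms(3,4,6) by (simp add: ln_\<alpha> field_simps)
  also have "\<dots> \<le> 1 / \<epsilon> * ((\<alpha> - 1) / \<alpha>) * (\<Sum>e\<in>M. w e)"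
    using one_minus_le_div_ln_one_plus[OF assms(4,5)] assms(3) weight_ge_1
    by (intro mult_right_mono sum_nonneg) (auto intro: order.trans[OF zero_le_one])
  also have "\<dots> = (\<Sum>e\<in>M. w e * (1 - 1 / (1 + \<epsilon>) ^ k) / (1 + \<epsilon> - 1))"
    unfolding sum_distrib_left using assms(3) by (intro sum.cong) (auto simp: \<alpha> field_simps)
  also have "\<dots> \<le> (\<Sum>e\<in>M. \<Sum>j=1..k. rounded_weight \<alpha> ((real j - 1) / real k) w e)"
    using sum_rounded_weight_shifts_ge[of "1 + \<epsilon>" k w] assms(4,6) weight_ge_1
    by (intro sum_mono) (fastforce simp: \<alpha>)
  also have "\<dots> = (\<Sum>j=1..k. \<Sum>e\<in>M. rounded_weight \<alpha> ((real j - 1) / real k) w e)"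
    by (rule sum.swap)
  finally show "real (card {1..k}) * ((1 - \<epsilon>) * ((\<alpha> - 1) / (\<alpha> * ln \<alpha>)) * (\<Sum>e\<in>M. w e))
      \<le> (\<Sum>j=1..k. \<Sum>e\<in>M. rounded_weight \<alpha> ((real j - 1) / real k) w e)" .
qed (use assms(6) in auto)

end
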